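(* Let $n\ge1$, let $C=(c_{i,j})$ be an $n\times n$ Bott matrix over $\mathbb{Z}_2$ and $Y_n=Y(C)$ the associated real Bott tower, and let $\alpha_{n+1},\dots,\alpha_{2n}\in\pi_1(Y_n)$ be the elements defined below, with images $\bar\alpha_j$ under the abelianization map $\pi_1(Y_n)\to H_1(Y_n;\mathbb{Z})$. Then $H_1(Y_n;\mathbb{Z})$ has a presentation with generators $\bar\alpha_j$, $n+1\le j\le 2n$, and relations $\bar\alpha_p\bar\alpha_q\bar\alpha_p^{-1}\bar\alpha_q^{-1}$ for $n+1\le p,q\le 2n$, together with $\bar\alpha_q^2$ for those $n+1\le q\le 2n$ for which there exists $p<q$ with $c_{p-n,q-n}=1$. Consequently $H_1(Y_n;\mathbb{Z})\cong\mathbb{Z}^{n-r}\oplus\mathbb{Z}_2^{r}$, where $r$ is the number of $n+1\le q\le 2n$ for which there exists $p<q$ with $c_{p-n,q-n}=1$.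
   Context: A Bott matrix is an $n\times n$ matrix $C=(c_{i,j})$ with entries in $\mathbb{Z}_2$ such that $c_{i,i}=1$ and $c_{i,j}=0$ for $i>j$ (so $c_{i,j}$ for $i\le 0$ is never $1$; only $p>n$ is relevant). Label the facets of the $n$-cube $I^n$ as $F_1,\dots,F_{2n}$ with $F_j$, $F_{n+j}$ opposite. With $e_1,\dots,e_n$ the standard basis of $\mathbb{Z}_2^n$, set $\lambda(F_j)=e_j$, $\lambda(F_{n+j})=e_j+\sum_{k>j}c_{j,k}e_k$. The real Bott tower $Y(C)$ is the small cover $(\mathbb{Z}_2^n\times I^n)/\sim$, where $(t,p)\sim(t',p')$ iff $p=p'$ and $t-t'$ lies in the span of $\lambda(F)$ over facets $F\ni p$. Let $W$ be the right-angled Coxeter group with generators $s_1,\dots,s_{2n}$ and relations $s_j^2=1$ and $(s_is_j)^2=1$ for $1\le i<j\le 2n$, $j\ne i+n$; then $\pi_1(Y_n)$ is the kernel of the homomorphism $W\to\mathbb{Z}_2^n$, $s_i\mapsto\lambda(F_i)$. For $n+1\le j\le 2n$, $\alpha_j:=s_js_{j-n}s_{j-n+1}^{c_{j-n,j-n+1}}\cdots s_n^{c_{j-n,n}}$ (so $\alpha_{2n}=s_{2n}s_n$); these lie in $\pi_1(Y_n)$ and generate it. *)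

theory Defs
  imports "HOL-Algebra.Product_Groups" "HOL-Algebra.Elementary_Groups"
    "HOL-Algebra.Generated_Groups" "HOL-Algebra.Coset" "HOL-Algebra.FiniteProduct"
begin

text \<open>Bott matrix: entries in Z_2 (rendered as bool), indices 1..n.\<close>
definition bott_matrix :: "nat \<Rightarrow> (nat \<Rightarrow> nat \<Rightarrow> bool) \<Rightarrow> bool" where
  "bott_matrix n c \<longleftrightarrow> (\<forall>i\<in>{1..n}. c i i) \<and> (\<forall>i\<in>{1..n}. \<forall>j\<in>{1..n}. i > j \<longrightarrow> \<not> c i j)"

text \<open>Generators s_1..s_{2n} of W are the letters 1..2n; words are lists.
  s_i and s_j commute unless i = j + n or j = i + n.\<close>
definition commuting :: "nat \<Rightarrow> nat \<Rightarrow> nat \<Rightarrow> bool" where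
  "commuting n i j \<longleftrightarrow> i \<in> {1..2*n} \<and> j \<in> {1..2*n} \<and> j \<noteq> i + n \<and> i \<noteq> j + n"

definition words :: "nat \<Rightarrow> nat list set" where
  "words n = {w. set w \<subseteq> {1..2*n}}"

text \<open>The congruence on words generated by the defining relations of the right-angled
  Coxeter group W: s_j^2 = 1 and (s_i s_j)^2 = 1 (i.e. s_i s_j = s_j s_i) for commuting pairs.\<close>
inductive_set wrel :: "nat \<Rightarrow> (nat list \<times> nat list) set" for n :: nat where
  wrefl: "w \<in> words n \<Longrightarrow> (w, w) \<in> wrel n"
| wsym: "(u, v) \<in> wrel n \<Longrightarrow> (v, u) \<in> wrel n"
| wtrans: "(u, v) \<in> wrel n \<Longrightarrow> (v, w) \<in> wrel n \<Longrightarrow> (u, w) \<in> wrel n"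
| wcancel: "u \<in> words n \<Longrightarrow> v \<in> words n \<Longrightarrow> s \<in> {1..2*n} \<Longrightarrow>
      (u @ [s, s] @ v, u @ v) \<in> wrel n"
| wcomm: "u \<in> words n \<Longrightarrow> v \<in> words n \<Longrightarrow> commuting n i j \<Longrightarrow>
      (u @ [i, j] @ v, u @ [j, i] @ v) \<in> wrel n"

definition coxW :: "nat \<Rightarrow> nat list set monoid" where
  "coxW n = \<lparr> carrier = words n // wrel n,
             mult = (\<lambda>A B. \<Union>a\<in>A. \<Union>b\<in>B. wrel n `` {a @ b}),
             one = wrel n `` {[]} \<rparr>"

text \<open>The characteristic function: lambda(F_i) in Z_2^n, as a predicate on coordinates 1..n.\<close>
definition lam :: "nat \<Rightarrow> (nat \<Rightarrow> nat \<Rightarrow> bool) \<Rightarrow> nat \<Rightarrow> nat \<Rightarrow> bool" where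
  "lam n c i k = (if i \<le> n then k = i
                  else k = i - n \<or> (i - n < k \<and> k \<le> n \<and> c (i - n) k))"

text \<open>Image of a word under W \<rightarrow> Z_2^n, s_i \<mapsto> lambda(F_i).\<close>
definition lam_word :: "nat \<Rightarrow> (nat \<Rightarrow> nat \<Rightarrow> bool) \<Rightarrow> nat list \<Rightarrow> nat \<Rightarrow> bool" where
  "lam_word n c w k = odd (length (filter (\<lambda>i. lam n c i k) w))"

text \<open>pi_1(Y(C)) = kernel of W \<rightarrow> Z_2^n.\<close>
definition pi1 :: "nat \<Rightarrow> (nat \<Rightarrow> nat \<Rightarrow> bool) \<Rightarrow> nat list set monoid" where
  "pi1 n c = (coxW n) \<lparr> carrier := {A \<in> carrier (coxW n). \<forall>w\<in>A. \<forall>k\<in>{1..n}. \<not> lam_word n c w k} \<rparr>"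

definition H1 :: "nat \<Rightarrow> (nat \<Rightarrow> nat \<Rightarrow> bool) \<Rightarrow> nat list set set monoid" where
  "H1 n c = pi1 n c Mod derived (pi1 n c) (carrier (pi1 n c))"

text \<open>The word alpha_j = s_j s_{j-n} s_{j-n+1}^{c_{j-n,j-n+1}} ... s_n^{c_{j-n,n}}.\<close>
definition alpha_word :: "nat \<Rightarrow> (nat \<Rightarrow> nat \<Rightarrow> bool) \<Rightarrow> nat \<Rightarrow> nat list" where
  "alpha_word n c j = [j, j - n] @ filter (\<lambda>k. c (j - n) k) [j - n + 1..<n + 1]"

definition alpha :: "nat \<Rightarrow> (nat \<Rightarrow> nat \<Rightarrow> bool) \<Rightarrow> nat \<Rightarrow> nat list set" where
  "alpha n c j = wrel n `` {alpha_word n c j}"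

definition alpha_bar :: "nat \<Rightarrow> (nat \<Rightarrow> nat \<Rightarrow> bool) \<Rightarrow> nat \<Rightarrow> nat list set set" where
  "alpha_bar n c j = derived (pi1 n c) (carrier (pi1 n c)) #>\<^bsub>pi1 n c\<^esub> alpha n c j"

definition torsion_idx :: "nat \<Rightarrow> (nat \<Rightarrow> nat \<Rightarrow> bool) \<Rightarrow> nat set" where
  "torsion_idx n c = {q \<in> {n+1..2*n}. \<exists>p. n + 1 \<le> p \<and> p < q \<and> c (p - n) (q - n)}"

end

theory Submission
  imports Defs
begin

text \<open>Reading a word in \<open>s\<^sub>1, \<dots>, s\<^bsub>2n\<^esub>\<close> from left to right, each letter \<open>s\<^sub>q\<close> with
  \<open>q > n\<close> can be traded for \<open>\<alpha>\<^sub>q\<close> times a word in the pairwise commuting letters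
  \<open>s\<^sub>1, \<dots>, s\<^sub>n\<close>, and \<open>\<alpha>\<^sub>q\<^bsup>\<plusminus>1\<^esup>\<close> can be moved to the left past such a word:
  \<open>s\<^bsub>q-n\<^esub>\<close> inverts it and all other \<open>s\<^sub>i\<close> commute with it. So every element of
  \<open>\<pi>\<^sub>1\<close> is a product of \<open>\<alpha>\<close>'s times a word in \<open>s\<^sub>1, \<dots>, s\<^sub>n\<close> which lies in the kernel
  of \<open>\<lambda>\<close>, i.e. contains every letter an even number of times, and is therefore trivial.
  If \<open>c\<^bsub>p-n,q-n\<^esub> = 1\<close> for some \<open>p < q\<close>, then \<open>s\<^bsub>q-n\<^esub>\<close> occurs once in \<open>\<alpha>\<^sub>p\<close>, whence
  \<open>\<alpha>\<^sub>p \<alpha>\<^sub>q\<^bsup>-1\<^esup> = \<alpha>\<^sub>q \<alpha>\<^sub>p\<close> and \<open>\<alpha>\<^sub>q\<^sup>2\<close> is a commutator. For every other \<open>q\<close>, the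
  homomorphism \<open>W \<rightarrow> D\<^sub>\<infinity>\<close> sending \<open>s\<^bsub>q-n\<^esub>\<close> and \<open>s\<^sub>q\<close> to the reflections \<open>x \<mapsto> -x\<close>
  and \<open>x \<mapsto> 1 - x\<close> maps \<open>\<pi>\<^sub>1\<close> into the translations \<open>\<int>\<close>; these maps, together with
  the parities of the letters \<open>s\<^sub>q\<close> (maps \<open>\<pi>\<^sub>1 \<rightarrow> \<int>/2\<close>), are dual to the \<open>\<alpha>\<^sub>j\<close>, so
  no further relations hold in \<open>H\<^sub>1\<close>.\<close>

section \<open>Abelian groups with coordinate homomorphisms\<close>

lemma (in comm_group) hom_finprod:
  assumes K: "comm_group K" and f: "f \<in> hom G K" and h: "h \<in> A \<rightarrow> carrier G"
  shows "f (finprod G h A) = finprod K (f \<circ> h) A"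
proof -
  interpret K: comm_group K
    by (rule K)
  interpret f: group_hom G K f
    by (simp add: group_hom_def group_hom_axioms_def f is_group K.is_group)
  show ?thesis
    using h
  proof (induction A rule: infinite_finite_induct)
    case (insert a A)
    then show ?case
      by (simp add: Pi_iff)
  qed simp_all
qed

lemma finprod_integer_group: "finprod integer_group f A = sum f A"
proof -
  interpret Z: comm_group integer_group
    by (rule abelian_integer_group)
  show ?thesis
  proof (induction A rule: infinite_finite_induct)
    case (insert a A)
    then show ?case
      by simp
  qed simp_all
qed

lemma finprod_integer_mod_group:
  assumes "f \<in> A \<rightarrow> carrier (integer_mod_group m)"
  shows "finprod (integer_mod_group m) f A = sum f A mod int m"
proof -
  interpret Z: comm_group "integer_mod_group m"
    by (rule abelian_integer_mod_group)
  show ?thesis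
    using assms
  proof (induction A rule: infinite_finite_induct)
    case (insert a A)
    then show ?case
      by (simp add: Pi_iff mod_add_right_eq)
  qed simp_all
qed

lemma (in group_hom) derived_subset_kernel:
  assumes "comm_group H"
  shows "derived G (carrier G) \<subseteq> kernel G H h"
proof -
  have "h ` derived G (carrier G) = derived H (h ` carrier G)"
    using derived_img[of "carrier G"] by simp
  also have "\<dots> = {\<one>\<^bsub>H\<^esub>}"
    by (rule comm_group.derived_eq_singleton[OF assms]) auto
  finally show ?thesis
    using G.derived_in_carrier[of "carrier G"] by (auto simp: kernel_def)
qed

lemma (in group) derived_quotient_universal:
  assumes "comm_group K" and "h \<in> hom G K"
  obtains f where "f \<in> hom (G Mod derived G (carrier G)) K"
    and "\<And>x. x \<in> carrier G \<Longrightarrow> f (derived G (carrier G) #> x) = h x"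
proof -
  interpret h: group_hom G K h
    using assms by (simp add: group_hom_def group_hom_axioms_def comm_group.axioms(2) is_group)
  show thesis
    using h.FactGroup_universal_kernel[OF derived_self_is_normal h.derived_subset_kernel[OF assms(1)]]
      that by blast
qed

text \<open>The coordinate maps read off the exponent of each generator, so the only relations
  among the generators are \<open>g\<^sub>q\<^sup>2 = 1\<close> for \<open>q \<in> T\<close>.\<close>

locale abelian_coordinates =
  fixes H :: "('a, 'b) monoid_scheme" (structure)
    and J T :: "'i set" and g :: "'i \<Rightarrow> 'a"
    and \<mu> :: "'i \<Rightarrow> 'a \<Rightarrow> int" and \<nu> :: "'i \<Rightarrow> 'a \<Rightarrow> int"
  assumes comm_group: "comm_group H"
    and finite_J: "finite J" and T_subset: "T \<subseteq> J"
    and g_closed: "g ` J \<subseteq> carrier H"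
    and generate_g: "generate H (g ` J) = carrier H"
    and g_square: "\<And>q. q \<in> T \<Longrightarrow> g q \<otimes> g q = \<one>"
    and \<mu>_hom: "\<And>q. q \<in> J - T \<Longrightarrow> \<mu> q \<in> hom H integer_group"
    and \<mu>_g: "\<And>q j. q \<in> J - T \<Longrightarrow> j \<in> J \<Longrightarrow> \<mu> q (g j) = (if j = q then 1 else 0)"
    and \<nu>_hom: "\<And>q. q \<in> T \<Longrightarrow> \<nu> q \<in> hom H (integer_mod_group 2)"
    and \<nu>_g: "\<And>q j. q \<in> T \<Longrightarrow> j \<in> J \<Longrightarrow> \<nu> q (g j) = (if j = q then 1 else 0)"
begin

sublocale comm_group H
  by (rule comm_group)

definition combination :: "('i \<Rightarrow> int) \<Rightarrow> 'a" where
  "combination k = (\<Otimes>j\<in>J. g j [^] k j)"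

lemma g_pow_closed: "j \<in> J \<Longrightarrow> g j [^] (e::int) \<in> carrier H"
  using g_closed by auto

lemma combination_closed: "combination k \<in> carrier H"
  unfolding combination_def by (auto intro: finprod_closed g_pow_closed)

lemma \<mu>_combination:
  assumes q: "q \<in> J - T"
  shows "\<mu> q (combination k) = k q"
proof -
  interpret \<mu>: group_hom H integer_group "\<mu> q"
    using \<mu>_hom[OF q] by (simp add: group_hom_def group_hom_axioms_def is_group)
  have "\<mu> q (combination k) = (\<Sum>j\<in>J. k j * \<mu> q (g j))"
    unfolding combination_def
    using g_closed by (simp add: hom_finprod[OF abelian_integer_group \<mu>_hom[OF q]] Pi_iff
        g_pow_closed finprod_integer_group \<mu>.hom_int_pow subsetD)
  also have "\<dots> = (\<Sum>j\<in>J. if j = q then k j else 0)"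
    using q by (intro sum.cong) (simp_all add: \<mu>_g)
  also have "\<dots> = k q"
    using q finite_J by simp
  finally show ?thesis .
qed

lemma \<nu>_combination:
  assumes q: "q \<in> T"
  shows "\<nu> q (combination k) = k q mod 2"
proof -
  interpret \<nu>: group_hom H "integer_mod_group 2" "\<nu> q"
    using \<nu>_hom[OF q] by (simp add: group_hom_def group_hom_axioms_def is_group)
  have "\<nu> q (combination k) = (\<Sum>j\<in>J. k j * \<nu> q (g j) mod 2) mod 2"
    unfolding combination_def
    using g_closed by (simp add: hom_finprod[OF abelian_integer_mod_group \<nu>_hom[OF q]] Pi_iff
        g_pow_closed finprod_integer_mod_group \<nu>.hom_int_pow int_pow_integer_mod_group
        carrier_integer_mod_group subsetD)
  also have "\<dots> = (\<Sum>j\<in>J. if j = q then k j mod 2 else 0) mod 2"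
    using q by (intro arg_cong[where f = "\<lambda>x. x mod 2"] sum.cong) (simp_all add: \<nu>_g)
  also have "\<dots> = k q mod 2"
    using q T_subset finite_J by (simp add: subsetD)
  finally show ?thesis .
qed

lemma g_pow_even:
  fixes e :: int
  assumes q: "q \<in> T" and "even e"
  shows "g q [^] e = \<one>"
proof -
  have gq: "g q \<in> carrier H"
    using q T_subset g_closed by auto
  obtain m where "e = 2 * m"
    using \<open>even e\<close> by (rule evenE)
  moreover have "g q [^] (2::int) = \<one>"
    using g_square[OF q] gq int_pow_int[of H "g q" 2] by (simp add: numeral_2_eq_2)
  ultimately show ?thesis
    using int_pow_pow[OF gq, of 2 m] by simp
qed

lemma combination_eq_one_iff:
  "combination k = \<one> \<longleftrightarrow> (\<forall>j\<in>J. if j \<in> T then even (k j) else k j = 0)"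
proof
  assume one: "combination k = \<one>"
  show "\<forall>j\<in>J. if j \<in> T then even (k j) else k j = 0"
  proof (intro ballI)
    fix j assume j: "j \<in> J"
    show "if j \<in> T then even (k j) else k j = 0"
    proof (cases "j \<in> T")
      case True
      then have "k j mod 2 = 0"
        using \<nu>_combination[of j k] one hom_one[OF \<nu>_hom[OF True]] by simp
      then show ?thesis
        using True by presburger
    next
      case False
      then show ?thesis
        using \<mu>_combination[of j k] one hom_one[OF \<mu>_hom] j by simp
    qed
  qed
next
  assume "\<forall>j\<in>J. if j \<in> T then even (k j) else k j = 0"
  then show "combination k = \<one>"
    unfolding combination_def by (intro finprod_one_eqI) (metis g_pow_even int_pow_0)
qed

lemma combination_add: "combination (\<lambda>j. k j + l j) = combination k \<otimes> combination l"
proof -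
  have "combination (\<lambda>j. k j + l j) = (\<Otimes>j\<in>J. g j [^] k j \<otimes> g j [^] l j)"
    unfolding combination_def
    using g_closed by (intro finprod_cong') (auto simp: int_pow_mult g_pow_closed)
  also have "\<dots> = combination k \<otimes> combination l"
    unfolding combination_def by (rule finprod_multf) (auto simp: g_pow_closed)
  finally show ?thesis .
qed

lemma combination_indicator:
  assumes q: "q \<in> J"
  shows "combination (\<lambda>j. if j = q then e else 0) = g q [^] e"
proof -
  have "combination (\<lambda>j. if j = q then e else 0)
      = (\<Otimes>j\<in>insert q (J - {q}). g j [^] (if j = q then e else 0))"
    unfolding combination_def using q by (simp add: insert_absorb)
  also have "\<dots> = g q [^] e \<otimes> (\<Otimes>j\<in>J - {q}. g j [^] (if j = q then e else 0))"
    using q finite_J by (subst finprod_insert) (auto simp: g_pow_closed)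
  also have "(\<Otimes>j\<in>J - {q}. g j [^] (if j = q then e else 0)) = \<one>"
    by (rule finprod_one_eqI) simp
  finally show ?thesis
    using g_pow_closed[OF q] by simp
qed

lemma g_pow_in_range_combination: "q \<in> J \<Longrightarrow> g q [^] (e::int) \<in> range combination"
  by (metis combination_indicator rangeI)

lemma carrier_eq_combinations: "carrier H = range combination"
proof
  show "range combination \<subseteq> carrier H"
    using combination_closed by blast
  show "carrier H \<subseteq> range combination"
  proof
    fix x assume "x \<in> carrier H"
    then have "x \<in> generate H (g ` J)"
      by (simp add: generate_g)
    then show "x \<in> range combination"
    proof (induction rule: generate.induct)
      case one
      have "combination (\<lambda>_. 0) = \<one>"
        by (simp add: combination_eq_one_iff)
      then show ?case
        by (metis rangeI)
    next
      case (incl h)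
      then show ?case
        using g_pow_in_range_combination[of _ 1] g_closed by (auto simp: subsetD)
    next
      case (inv h)
      then show ?case
        using g_pow_in_range_combination[of _ "-1"] g_closed by (auto simp: int_pow_neg subsetD)
    next
      case (eng h1 h2)
      then obtain k l where "h1 = combination k" "h2 = combination l"
        by blast
      then have "h1 \<otimes> h2 = combination (\<lambda>j. k j + l j)"
        by (simp add: combination_add)
      then show ?case
        by (metis rangeI)
    qed
  qed
qed

end

locale enumerated_abelian_coordinates = abelian_coordinates +
  fixes e\<^sub>F e\<^sub>T
  assumes bij_e\<^sub>F: "bij_betw e\<^sub>F {..<card J - card T} (J - T)"
    and bij_e\<^sub>T: "bij_betw e\<^sub>T {..<card T} T"
begin

abbreviation target :: "((nat \<Rightarrow> int) \<times> (nat \<Rightarrow> int)) monoid" where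
  "target \<equiv> sum_group {..<card J - card T} (\<lambda>_. integer_group)
    \<times>\<times> sum_group {..<card T} (\<lambda>_. integer_mod_group 2)"

definition coords :: "'a \<Rightarrow> (nat \<Rightarrow> int) \<times> (nat \<Rightarrow> int)" where
  "coords x = ((\<lambda>i\<in>{..<card J - card T}. \<mu> (e\<^sub>F i) x), (\<lambda>i\<in>{..<card T}. \<nu> (e\<^sub>T i) x))"

lemma carrier_target:
  "carrier target = ({..<card J - card T} \<rightarrow>\<^sub>E UNIV) \<times> ({..<card T} \<rightarrow>\<^sub>E {0..<2})"
  by (simp add: carrier_sum_group carrier_integer_mod_group)

lemma e\<^sub>F_in: "i < card J - card T \<Longrightarrow> e\<^sub>F i \<in> J - T"
  using bij_e\<^sub>F by (auto simp: bij_betw_def)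

lemma e\<^sub>T_in: "i < card T \<Longrightarrow> e\<^sub>T i \<in> T"
  using bij_e\<^sub>T by (auto simp: bij_betw_def)

lemma coords_hom: "coords \<in> hom H target"
proof (rule homI)
  fix x assume "x \<in> carrier H"
  then show "coords x \<in> carrier target"
    using hom_in_carrier[OF \<nu>_hom] e\<^sub>T_in
    unfolding carrier_target by (auto simp: coords_def carrier_integer_mod_group)
next
  fix x y assume "x \<in> carrier H" "y \<in> carrier H"
  then show "coords (x \<otimes> y) = coords x \<otimes>\<^bsub>target\<^esub> coords y"
    using hom_mult[OF \<mu>_hom[OF e\<^sub>F_in]] hom_mult[OF \<nu>_hom[OF e\<^sub>T_in]]
    by (auto simp: coords_def intro!: restrict_ext)
qed

lemma coords_combination: "coords (combination k) =
    ((\<lambda>i\<in>{..<card J - card T}. k (e\<^sub>F i)), (\<lambda>i\<in>{..<card T}. k (e\<^sub>T i) mod 2))"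
  using \<mu>_combination[OF e\<^sub>F_in] \<nu>_combination[OF e\<^sub>T_in]
  by (auto simp: coords_def intro!: restrict_ext)

lemma coords_inj: "inj_on coords (carrier H)"
proof -
  interpret coords: group_hom H target coords
    using coords_hom by (simp add: group_hom_def group_hom_axioms_def is_group DirProd_group)
  have "x = \<one>" if x: "x \<in> carrier H" and one: "coords x = \<one>\<^bsub>target\<^esub>" for x
  proof -
    obtain k where k: "x = combination k"
      using x carrier_eq_combinations by blast
    have "if j \<in> T then even (k j) else k j = 0" if j: "j \<in> J" for j
    proof (cases "j \<in> T")
      case True
      then obtain i where "i < card T" "j = e\<^sub>T i"
        using bij_e\<^sub>T by (auto simp: bij_betw_def)
      then show ?thesis
        using one True by (auto simp: k coords_combination fun_eq_iff split: if_splits)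
    next
      case False
      then obtain i where "i < card J - card T" "j = e\<^sub>F i"
        using bij_e\<^sub>F j by (auto simp: bij_betw_def)
      then show ?thesis
        using one False by (auto simp: k coords_combination fun_eq_iff split: if_splits)
    qed
    then show ?thesis
      using k combination_eq_one_iff by blast
  qed
  then have "kernel H target coords = {\<one>}"
    by (auto simp: kernel_def)
  then show ?thesis
    by (rule coords.trivial_ker_imp_inj)
qed

lemma coords_surj: "coords ` carrier H = carrier target"
proof
  show "coords ` carrier H \<subseteq> carrier target"
    using hom_in_carrier[OF coords_hom] by blast
  show "carrier target \<subseteq> coords ` carrier H"
  proof
    fix ab assume "ab \<in> carrier target"
    then obtain a b where ab: "ab = (a, b)" and a: "a \<in> {..<card J - card T} \<rightarrow>\<^sub>E UNIV"
      and b: "b \<in> {..<card T} \<rightarrow>\<^sub>E {0..<2}"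
      unfolding carrier_target by blast
    define k where "k j = (if j \<in> T then b (inv_into {..<card T} e\<^sub>T j)
      else a (inv_into {..<card J - card T} e\<^sub>F j))" for j
    have "(\<lambda>i\<in>{..<card J - card T}. k (e\<^sub>F i)) = a"
      using a e\<^sub>F_in bij_e\<^sub>F
      by (auto simp: k_def bij_betw_def inv_into_f_f PiE_def extensional_def fun_eq_iff)
    moreover have "(\<lambda>i\<in>{..<card T}. k (e\<^sub>T i) mod 2) = b"
      using b e\<^sub>T_in bij_e\<^sub>T
      by (auto simp: k_def bij_betw_def inv_into_f_f PiE_def extensional_def fun_eq_iff Pi_iff)
    ultimately have "coords (combination k) = ab"
      by (simp add: ab coords_combination)
    then show "ab \<in> coords ` carrier H"
      using combination_closed by blast
  qed
qed

lemma coords_iso: "coords \<in> iso H target"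
  using coords_hom coords_inj coords_surj by (simp add: iso_def bij_betw_def)

end

context abelian_coordinates
begin

theorem iso_sum_groups:
  "H \<cong> sum_group {..<card J - card T} (\<lambda>_. integer_group)
     \<times>\<times> sum_group {..<card T} (\<lambda>_. integer_mod_group 2)"
proof -
  have "finite T" "finite (J - T)"
    using finite_J T_subset by (auto intro: finite_subset)
  moreover have "card (J - T) = card J - card T"
    using finite_J T_subset by (simp add: card_Diff_subset finite_subset)
  ultimately obtain e\<^sub>F e\<^sub>T where "bij_betw e\<^sub>F {..<card J - card T} (J - T)"
    and "bij_betw e\<^sub>T {..<card T} T"
    by (metis atLeast0LessThan ex_bij_betw_nat_finite)
  then interpret enumerated_abelian_coordinates H J T g \<mu> \<nu> e\<^sub>F e\<^sub>T
    by unfold_locales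
  show ?thesis
    using coords_iso by (auto simp: is_iso_def)
qed

end

section \<open>The right-angled Coxeter group\<close>

lemma words_Nil [simp]: "[] \<in> words n"
  and words_Cons [simp]: "a # w \<in> words n \<longleftrightarrow> a \<in> {1..2*n} \<and> w \<in> words n"
  and words_append [simp]: "u @ v \<in> words n \<longleftrightarrow> u \<in> words n \<and> v \<in> words n"
  and words_rev [simp]: "rev w \<in> words n \<longleftrightarrow> w \<in> words n"
  by (auto simp: words_def)

lemma wrel_imp_words: "(u, v) \<in> wrel n \<Longrightarrow> u \<in> words n \<and> v \<in> words n"
  by (induction rule: wrel.induct) (auto simp: words_def commuting_def)

lemma wrel_in_context:
  "(u, v) \<in> wrel n \<Longrightarrow> x \<in> words n \<Longrightarrow> y \<in> words n \<Longrightarrow> (x @ u @ y, x @ v @ y) \<in> wrel n"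
proof (induction rule: wrel.induct)
  case (wcancel u v s)
  then show ?case using wrel.wcancel[of "x @ u" n "v @ y" s] by simp
next
  case (wcomm u v i j)
  then show ?case using wrel.wcomm[of "x @ u" n "v @ y" i j] by simp
qed (auto intro: wrel.wrefl wrel.wsym wrel.wtrans)

lemma wrel_equiv: "equiv (words n) (wrel n)"
proof (rule equivI)
  show "wrel n \<subseteq> words n \<times> words n"
    using wrel_imp_words by fast
  show "refl_on (words n) (wrel n)"
    by (rule refl_onI) (rule wrel.wrefl)
  show "sym (wrel n)"
    by (rule symI) (rule wrel.wsym)
  show "trans (wrel n)"
    by (rule transI) (rule wrel.wtrans)
qed

text \<open>\<open>wrel\<close> as a predicate, so that it chains with \<open>also\<close>/\<open>finally\<close>.\<close>

definition weq :: "nat \<Rightarrow> nat list \<Rightarrow> nat list \<Rightarrow> bool" where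
  "weq n u v \<longleftrightarrow> (u, v) \<in> wrel n"

lemma weq_trans [trans]: "weq n u v \<Longrightarrow> weq n v w \<Longrightarrow> weq n u w"
  unfolding weq_def by (rule wrel.wtrans)

lemma weq_sym: "weq n u v \<Longrightarrow> weq n v u"
  unfolding weq_def by (rule wrel.wsym)

lemma weq_refl: "w \<in> words n \<Longrightarrow> weq n w w"
  unfolding weq_def by (rule wrel.wrefl)

lemma weq_imp_words: "weq n u v \<Longrightarrow> u \<in> words n \<and> v \<in> words n"
  unfolding weq_def by (rule wrel_imp_words)

lemma weq_append: "weq n u u' \<Longrightarrow> weq n v v' \<Longrightarrow> weq n (u @ v) (u' @ v')"
proof -
  assume u: "weq n u u'" and v: "weq n v v'"
  have "weq n (u @ v) (u' @ v)"
    using wrel_in_context[of u u' n "[]" v] u weq_imp_words[OF v] by (simp add: weq_def)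
  also have "weq n (u' @ v) (u' @ v')"
    using wrel_in_context[of v v' n u' "[]"] v weq_imp_words[OF u] by (simp add: weq_def)
  finally show ?thesis .
qed

lemma weq_append_left: "weq n v v' \<Longrightarrow> u \<in> words n \<Longrightarrow> weq n (u @ v) (u @ v')"
  by (simp add: weq_append weq_refl)

lemma weq_append_right: "weq n u u' \<Longrightarrow> v \<in> words n \<Longrightarrow> weq n (u @ v) (u' @ v)"
  by (simp add: weq_append weq_refl)

lemma weq_square: "s \<in> {1..2*n} \<Longrightarrow> weq n [s, s] []"
  using wrel.wcancel[of "[]" n "[]" s] by (simp add: weq_def)

lemma weq_commute_letters: "commuting n i j \<Longrightarrow> weq n [i, j] [j, i]"
  using wrel.wcomm[of "[]" n "[]" i j] by (simp add: weq_def)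

lemma weq_commute_letter:
  assumes "\<forall>a\<in>set v. commuting n a i"
    and "i \<in> {1..2*n}" and "v \<in> words n"
  shows "weq n (v @ [i]) ([i] @ v)"
  using assms
proof (induction v)
  case Nil
  then show ?case by (simp add: weq_refl)
next
  case (Cons a v)
  have "weq n ([a] @ v @ [i]) ([a] @ [i] @ v)"
    using Cons by (intro weq_append_left) auto
  also have "weq n \<dots> ([i, a] @ v)"
    using Cons weq_append_right[OF weq_commute_letters[of n a i], of v] by simp
  finally show ?case by simp
qed

lemma weq_commute_words:
  assumes "\<forall>a\<in>set v. \<forall>b\<in>set y. commuting n a b"
    and "v \<in> words n" and "y \<in> words n"
  shows "weq n (v @ y) (y @ v)"
  using assms
proof (induction y rule: rev_induct)
  case Nil
  then show ?case by (simp add: weq_refl)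
next
  case (snoc b y)
  have "weq n ((v @ y) @ [b]) ((y @ v) @ [b])"
    using snoc by (intro weq_append_right) auto
  also have "weq n ((y @ v) @ [b]) (y @ [b] @ v)"
    using snoc weq_append_left[OF weq_commute_letter[of v n b], of y] by auto
  finally show ?case by simp
qed

lemma weq_rev_commuting:
  assumes "\<forall>a\<in>set x. \<forall>b\<in>set x. commuting n a b" and "x \<in> words n"
  shows "weq n x (rev x)"
  using assms
proof (induction x)
  case Nil
  then show ?case by (simp add: weq_refl)
next
  case (Cons a x)
  have "weq n ([a] @ x) ([a] @ rev x)"
    using Cons by (intro weq_append_left) auto
  also have "weq n ([a] @ rev x) (rev x @ [a])"
    using Cons weq_sym[OF weq_commute_letter[of "rev x" n a]] by simp
  finally show ?case by simp
qed

lemma weq_append_rev: "x \<in> words n \<Longrightarrow> weq n (x @ rev x) []"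
proof (induction x)
  case Nil
  then show ?case by (simp add: weq_refl)
next
  case (Cons a x)
  have "weq n ([a] @ (x @ rev x) @ [a]) ([a] @ [] @ [a])"
    using Cons by (intro weq_append weq_refl) auto
  also have "weq n ([a] @ [] @ [a]) []"
    using Cons weq_square[of a n] by simp
  finally show ?case by simp
qed

abbreviation cls :: "nat \<Rightarrow> nat list \<Rightarrow> nat list set" where
  "cls n w \<equiv> wrel n `` {w}"

lemma cls_eqI: "weq n u v \<Longrightarrow> cls n u = cls n v"
  unfolding weq_def by (meson equiv_class_eq wrel_equiv)

lemma cls_in_carrier: "w \<in> words n \<Longrightarrow> cls n w \<in> carrier (coxW n)"
  by (simp add: coxW_def quotientI)

lemma carrier_coxW_E:
  assumes "X \<in> carrier (coxW n)"
  obtains w where "w \<in> words n" "X = cls n w"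
  using assms by (auto simp: coxW_def quotient_def)

lemma mult_cls:
  assumes "u \<in> words n" "v \<in> words n"
  shows "cls n u \<otimes>\<^bsub>coxW n\<^esub> cls n v = cls n (u @ v)"
proof -
  have "(\<Union>a\<in>cls n u. \<Union>b\<in>cls n v. cls n (a @ b)) = cls n (u @ v)"
  proof (intro equalityI subsetI)
    fix x assume "x \<in> (\<Union>a\<in>cls n u. \<Union>b\<in>cls n v. cls n (a @ b))"
    then obtain a b where "weq n u a" "weq n v b" "weq n (a @ b) x"
      by (auto simp: weq_def)
    then have "weq n (u @ v) x"
      using weq_append weq_trans by blast
    then show "x \<in> cls n (u @ v)"
      by (simp add: weq_def)
  next
    fix x assume "x \<in> cls n (u @ v)"
    then show "x \<in> (\<Union>a\<in>cls n u. \<Union>b\<in>cls n v. cls n (a @ b))"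
      using assms by (auto intro: wrel.wrefl)
  qed
  then show ?thesis
    by (simp add: coxW_def)
qed

lemma one_coxW: "\<one>\<^bsub>coxW n\<^esub> = cls n []"
  by (simp add: coxW_def)

lemma group_coxW: "group (coxW n)"
proof (rule groupI)
  fix x y assume "x \<in> carrier (coxW n)" "y \<in> carrier (coxW n)"
  then show "x \<otimes>\<^bsub>coxW n\<^esub> y \<in> carrier (coxW n)"
    by (elim carrier_coxW_E) (simp add: mult_cls cls_in_carrier)
next
  show "\<one>\<^bsub>coxW n\<^esub> \<in> carrier (coxW n)"
    by (simp add: one_coxW cls_in_carrier)
next
  fix x y z assume "x \<in> carrier (coxW n)" "y \<in> carrier (coxW n)" "z \<in> carrier (coxW n)"
  then show "x \<otimes>\<^bsub>coxW n\<^esub> y \<otimes>\<^bsub>coxW n\<^esub> z = x \<otimes>\<^bsub>coxW n\<^esub> (y \<otimes>\<^bsub>coxW n\<^esub> z)"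
    by (elim carrier_coxW_E) (simp add: mult_cls)
next
  fix x assume "x \<in> carrier (coxW n)"
  then show "\<one>\<^bsub>coxW n\<^esub> \<otimes>\<^bsub>coxW n\<^esub> x = x"
    by (elim carrier_coxW_E) (simp add: mult_cls one_coxW)
next
  fix x assume "x \<in> carrier (coxW n)"
  then obtain w where w: "w \<in> words n" "x = cls n w" by (rule carrier_coxW_E)
  then have "cls n (rev w) \<otimes>\<^bsub>coxW n\<^esub> x = \<one>\<^bsub>coxW n\<^esub>"
    using weq_append_rev[of "rev w" n] by (simp add: mult_cls one_coxW cls_eqI)
  then show "\<exists>y\<in>carrier (coxW n). y \<otimes>\<^bsub>coxW n\<^esub> x = \<one>\<^bsub>coxW n\<^esub>"
    using w cls_in_carrier by (metis words_rev)
qed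

lemma inv_cls: "w \<in> words n \<Longrightarrow> inv\<^bsub>coxW n\<^esub> (cls n w) = cls n (rev w)"
  using weq_append_rev[of "rev w" n]
  by (intro group.inv_equality[OF group_coxW]) (simp_all add: mult_cls one_coxW cls_eqI cls_in_carrier)

definition cls_lift :: "(nat list \<Rightarrow> 'a) \<Rightarrow> nat list set \<Rightarrow> 'a" where
  "cls_lift f A = f (SOME w. w \<in> A)"

lemma cls_lift_cls:
  assumes "\<And>u v. (u, v) \<in> wrel n \<Longrightarrow> f u = f v" and "w \<in> words n"
  shows "cls_lift f (cls n w) = f w"
proof -
  have "(w, SOME v. v \<in> cls n w) \<in> wrel n"
    using someI[of "\<lambda>v. v \<in> cls n w" w] wrel.wrefl[OF assms(2)] by blast
  then show ?thesis
    unfolding cls_lift_def using assms(1) by metis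
qed

definition parity :: "(nat \<Rightarrow> bool) \<Rightarrow> nat list \<Rightarrow> bool" where
  "parity P w \<longleftrightarrow> odd (length (filter P w))"

lemma parity_Nil [simp]: "\<not> parity P []"
  and parity_Cons [simp]: "parity P (a # w) \<longleftrightarrow> P a \<noteq> parity P w"
  and parity_append [simp]: "parity P (u @ v) \<longleftrightarrow> parity P u \<noteq> parity P v"
  and parity_rev [simp]: "parity P (rev w) \<longleftrightarrow> parity P w"
  by (simp_all add: parity_def rev_filter[symmetric])

lemma parity_cong: "(\<And>a. a \<in> set w \<Longrightarrow> P a = Q a) \<Longrightarrow> parity P w = parity Q w"
  unfolding parity_def by (metis filter_cong)

lemma parity_eq_distinct: "distinct w \<Longrightarrow> parity (\<lambda>a. a = k) w \<longleftrightarrow> k \<in> set w"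
  by (induction w) auto

lemma parity_wrel: "(u, v) \<in> wrel n \<Longrightarrow> parity P u = parity P v"
  by (induction rule: wrel.induct) auto

lemma lam_word_parity: "lam_word n c w k = parity (\<lambda>i. lam n c i k) w"
  by (simp add: lam_word_def parity_def)

text \<open>The infinite dihedral group: \<open>(t, r)\<close> stands for the affine map
  \<open>x \<mapsto> t + (if r then -x else x)\<close> of \<open>\<int>\<close>, and \<open>dih_word n k\<close> is the homomorphism from \<open>W\<close>
  sending \<open>s\<^sub>k\<close> to \<open>x \<mapsto> -x\<close>, \<open>s\<^bsub>k+n\<^esub>\<close> to \<open>x \<mapsto> 1 - x\<close> and all other generators to the
  identity.\<close>

definition dih_mult :: "int \<times> bool \<Rightarrow> int \<times> bool \<Rightarrow> int \<times> bool" where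
  "dih_mult p q = (fst p + (if snd p then - fst q else fst q), snd p \<noteq> snd q)"

definition dih_letter :: "nat \<Rightarrow> nat \<Rightarrow> nat \<Rightarrow> int \<times> bool" where
  "dih_letter n k a = (if a = k then (0, True) else if a = k + n then (1, True) else (0, False))"

definition dih_word :: "nat \<Rightarrow> nat \<Rightarrow> nat list \<Rightarrow> int \<times> bool" where
  "dih_word n k w = foldr (\<lambda>a. dih_mult (dih_letter n k a)) w (0, False)"

lemma dih_word_Nil [simp]: "dih_word n k [] = (0, False)"
  and dih_word_Cons: "dih_word n k (a # w) = dih_mult (dih_letter n k a) (dih_word n k w)"
  by (simp_all add: dih_word_def)

lemma dih_mult_assoc: "dih_mult (dih_mult p q) r = dih_mult p (dih_mult q r)"
  by (auto simp: dih_mult_def)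

lemma dih_word_append: "dih_word n k (u @ v) = dih_mult (dih_word n k u) (dih_word n k v)"
  by (induction u) (auto simp: dih_word_Cons dih_mult_assoc, simp add: dih_mult_def)

lemma dih_word_wrel: "(u, v) \<in> wrel n \<Longrightarrow> dih_word n k u = dih_word n k v"
proof (induction rule: wrel.induct)
  case (wcancel u v s)
  have "dih_word n k ([s, s] @ v) = dih_word n k v"
    by (auto simp: dih_word_append dih_word_Cons dih_letter_def dih_mult_def)
  then show ?case
    by (simp add: dih_word_append)
next
  case (wcomm u v i j)
  then have "dih_word n k ([i, j] @ v) = dih_word n k ([j, i] @ v)"
    by (auto simp: dih_word_append dih_word_Cons dih_letter_def dih_mult_def commuting_def)
  then show ?case
    by (simp add: dih_word_append)
qed auto

lemma snd_dih_word: "snd (dih_word n k w) = parity (\<lambda>a. a = k \<or> a = k + n) w"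
  by (induction w) (auto simp: dih_word_Cons dih_letter_def dih_mult_def)

lemma dih_word_avoiding: "\<forall>a\<in>set w. a \<noteq> k \<and> a \<noteq> k + n \<Longrightarrow> dih_word n k w = (0, False)"
  by (induction w) (auto simp: dih_word_Cons dih_letter_def dih_mult_def)

section \<open>The fundamental group and its generators\<close>

lemma carrier_pi1:
  "carrier (pi1 n c) = {A \<in> carrier (coxW n). \<forall>w\<in>A. \<forall>k\<in>{1..n}. \<not> lam_word n c w k}"
  by (simp add: pi1_def)

lemma cls_in_pi1_iff:
  "w \<in> words n \<Longrightarrow> cls n w \<in> carrier (pi1 n c) \<longleftrightarrow> (\<forall>k\<in>{1..n}. \<not> lam_word n c w k)"
  unfolding carrier_pi1 lam_word_parity
  by (auto simp: cls_in_carrier intro: wrel.wrefl dest: parity_wrel)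

lemma carrier_pi1_E:
  assumes "X \<in> carrier (pi1 n c)"
  obtains w where "w \<in> words n" "X = cls n w" "\<forall>k\<in>{1..n}. \<not> lam_word n c w k"
proof -
  from assms have "X \<in> carrier (coxW n)"
    by (simp add: carrier_pi1)
  then obtain w where w: "w \<in> words n" "X = cls n w"
    by (rule carrier_coxW_E)
  with assms show thesis
    using that cls_in_pi1_iff by blast
qed

lemma subgroup_pi1: "subgroup (carrier (pi1 n c)) (coxW n)"
proof (rule group.subgroupI[OF group_coxW])
  show "carrier (pi1 n c) \<subseteq> carrier (coxW n)"
    by (auto simp: carrier_pi1)
  show "carrier (pi1 n c) \<noteq> {}"
    using cls_in_pi1_iff[of "[]" n c] by (auto simp: lam_word_parity)
next
  fix a assume "a \<in> carrier (pi1 n c)"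
  then show "inv\<^bsub>coxW n\<^esub> a \<in> carrier (pi1 n c)"
    by (elim carrier_pi1_E) (simp add: inv_cls cls_in_pi1_iff lam_word_parity)
next
  fix a b assume "a \<in> carrier (pi1 n c)" "b \<in> carrier (pi1 n c)"
  then show "a \<otimes>\<^bsub>coxW n\<^esub> b \<in> carrier (pi1 n c)"
    by (elim carrier_pi1_E) (simp add: mult_cls cls_in_pi1_iff lam_word_parity)
qed

lemma group_pi1: "group (pi1 n c)"
  using group.subgroup_imp_group[OF group_coxW subgroup_pi1] by (simp add: pi1_def)

lemma mult_pi1 [simp]: "x \<otimes>\<^bsub>pi1 n c\<^esub> y = x \<otimes>\<^bsub>coxW n\<^esub> y"
  by (simp add: pi1_def)

lemma inv_pi1: "x \<in> carrier (pi1 n c) \<Longrightarrow> inv\<^bsub>pi1 n c\<^esub> x = inv\<^bsub>coxW n\<^esub> x"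
  using group.m_inv_consistent[OF group_coxW subgroup_pi1] by (simp add: pi1_def)

definition alpha_tail :: "nat \<Rightarrow> (nat \<Rightarrow> nat \<Rightarrow> bool) \<Rightarrow> nat \<Rightarrow> nat list" where
  "alpha_tail n c q = filter (\<lambda>k. c (q - n) k) [q - n + 1..<n + 1]"

lemma alpha_word_eq: "alpha_word n c q = [q, q - n] @ alpha_tail n c q"
  by (simp add: alpha_word_def alpha_tail_def)

lemma set_alpha_tail: "set (alpha_tail n c q) \<subseteq> {q - n + 1..n}"
  by (auto simp: alpha_tail_def)

lemma distinct_alpha_tail: "distinct (alpha_tail n c q)"
  by (simp add: alpha_tail_def)

lemma alpha_word_in_words: "q \<in> {n+1..2*n} \<Longrightarrow> alpha_word n c q \<in> words n"
  using set_alpha_tail[of n c q] by (auto simp: alpha_word_eq words_def)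

lemma alpha_in_pi1: "q \<in> {n+1..2*n} \<Longrightarrow> alpha n c q \<in> carrier (pi1 n c)"
proof -
  assume q: "q \<in> {n+1..2*n}"
  let ?i = "q - n" and ?P = "alpha_tail n c q"
  have "\<not> lam_word n c (alpha_word n c q) k" if k: "k \<in> {1..n}" for k
  proof -
    have "parity (\<lambda>a. lam n c a k) ?P = parity (\<lambda>a. a = k) ?P"
      using set_alpha_tail[of n c q] by (intro parity_cong) (auto simp: lam_def)
    also have "\<dots> \<longleftrightarrow> ?i < k \<and> k \<le> n \<and> c ?i k"
      by (auto simp: parity_eq_distinct distinct_alpha_tail alpha_tail_def)
    finally show ?thesis
      using q k by (auto simp: lam_word_parity alpha_word_eq lam_def)
  qed
  then show ?thesis
    using q by (simp add: alpha_def cls_in_pi1_iff alpha_word_in_words)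
qed

definition low_word :: "nat \<Rightarrow> nat list \<Rightarrow> bool" where
  "low_word n w \<longleftrightarrow> set w \<subseteq> {1..n}"

lemma low_word_Nil [simp]: "low_word n []"
  and low_word_Cons [simp]: "low_word n (a # w) \<longleftrightarrow> a \<in> {1..n} \<and> low_word n w"
  and low_word_append [simp]: "low_word n (u @ v) \<longleftrightarrow> low_word n u \<and> low_word n v"
  by (auto simp: low_word_def)

lemma low_word_imp_words: "low_word n w \<Longrightarrow> w \<in> words n"
  by (auto simp: low_word_def words_def)

lemma commuting_low: "a \<in> {1..n} \<Longrightarrow> b \<in> {1..n} \<Longrightarrow> commuting n a b"
  by (auto simp: commuting_def)

lemma weq_rev_low_word: "low_word n x \<Longrightarrow> weq n x (rev x)"
  by (rule weq_rev_commuting) (auto simp: low_word_def subset_iff intro: commuting_low low_word_imp_words)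

text \<open>Normal forms of words in the pairwise commuting letters \<open>s\<^sub>1, \<dots>, s\<^sub>n\<close>.\<close>

definition subset_word :: "nat \<Rightarrow> nat set \<Rightarrow> nat list" where
  "subset_word n B = filter (\<lambda>k. k \<in> B) [1..<n+1]"

lemma low_word_subset_word: "low_word n (subset_word n B)"
  by (auto simp: low_word_def subset_word_def)

lemma weq_subset_word_snoc:
  assumes i: "i \<in> {1..n}"
  shows "\<exists>B'. weq n (subset_word n B @ [i]) (subset_word n B')"
proof -
  have "[1..<n+1] = [1..<i] @ [i..<n+1]"
    using i upt_add_eq_append[of 1 i "n + 1 - i"] by auto
  also have "[i..<n+1] = [i] @ [i+1..<n+1]"
    using i by (simp add: upt_conv_Cons)
  finally have split: "[1..<n+1] = [1..<i] @ [i] @ [i+1..<n+1]" .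
  define L where "L = filter (\<lambda>k. k \<in> B) [1..<i]"
  define U where "U = filter (\<lambda>k. k \<in> B) [i+1..<n+1]"
  define B' where "B' = (if i \<in> B then B - {i} else insert i B)"
  have B: "subset_word n B = L @ (if i \<in> B then [i] else []) @ U"
    unfolding subset_word_def L_def U_def by (subst split) simp
  have "filter (\<lambda>k. k \<in> B') [1..<i] = L" "filter (\<lambda>k. k \<in> B') [i+1..<n+1] = U"
    unfolding L_def U_def B'_def by (auto intro: filter_cong)
  then have B': "subset_word n B' = L @ (if i \<in> B then [] else [i]) @ U"
    unfolding subset_word_def by (subst split) (simp add: B'_def)
  have LU: "L \<in> words n" "U \<in> words n"
    using i by (auto simp: L_def U_def words_def)
  have "weq n (U @ [i]) ([i] @ U)"
    using i LU by (intro weq_commute_letter) (auto simp: U_def commuting_def)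
  then have "weq n (subset_word n B @ [i]) ((L @ (if i \<in> B then [i] else [])) @ [i] @ U)"
    using B LU i by (simp add: weq_append_left)
  also have "weq n \<dots> (subset_word n B')"
    using B' LU i weq_append_right[OF weq_append_left[OF weq_square[of i n], of L], of U]
    by (cases "i \<in> B") (auto intro: weq_refl)
  finally show ?thesis ..
qed

lemma weq_low_word_subset_word: "low_word n x \<Longrightarrow> \<exists>B. weq n x (subset_word n B)"
proof (induction x rule: rev_induct)
  case Nil
  have "subset_word n {} = []"
    by (simp add: subset_word_def)
  then show ?case
    by (metis weq_refl words_Nil)
next
  case (snoc a x)
  then obtain B where "weq n x (subset_word n B)"
    by auto
  then have "weq n (x @ [a]) (subset_word n B @ [a])"
    using snoc by (intro weq_append_right) auto
  moreover obtain B' where "weq n (subset_word n B @ [a]) (subset_word n B')"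
    using snoc weq_subset_word_snoc by fastforce
  ultimately show ?case
    using weq_trans by blast
qed

lemma subset_word_in_pi1: "cls n (subset_word n B) \<in> carrier (pi1 n c) \<Longrightarrow> subset_word n B = []"
proof -
  assume pi1: "cls n (subset_word n B) \<in> carrier (pi1 n c)"
  have low: "low_word n (subset_word n B)"
    by (rule low_word_subset_word)
  have "k \<notin> set (subset_word n B)" if k: "k \<in> {1..n}" for k
  proof -
    have "lam_word n c (subset_word n B) k = parity (\<lambda>a. a = k) (subset_word n B)"
      unfolding lam_word_parity using low by (intro parity_cong) (auto simp: low_word_def lam_def)
    also have "\<dots> \<longleftrightarrow> k \<in> set (subset_word n B)"
      by (simp add: parity_eq_distinct subset_word_def)
    finally show ?thesis
      using pi1 k low_word_imp_words[OF low] cls_in_pi1_iff by blast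
  qed
  then have "set (subset_word n B) = {}"
    using low unfolding low_word_def by (metis subsetD equals0I)
  then show ?thesis
    by simp
qed

text \<open>Since all generators are involutions, the reversed word represents the inverse.\<close>

definition alpha_word_signed :: "nat \<Rightarrow> (nat \<Rightarrow> nat \<Rightarrow> bool) \<Rightarrow> nat \<Rightarrow> bool \<Rightarrow> nat list" where
  "alpha_word_signed n c q b = (if b then rev (alpha_word n c q) else alpha_word n c q)"

lemma alpha_word_signed_in_words: "q \<in> {n+1..2*n} \<Longrightarrow> alpha_word_signed n c q b \<in> words n"
  by (simp add: alpha_word_signed_def alpha_word_in_words)

lemma weq_alpha_reflect:
  assumes q: "q \<in> {n+1..2*n}"
  shows "weq n ([q - n] @ alpha_word n c q) (rev (alpha_word n c q) @ [q - n])"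
proof -
  let ?i = "q - n" and ?P = "alpha_tail n c q"
  have P: "low_word n ?P"
    using set_alpha_tail[of n c q] by (auto simp: low_word_def)
  have "weq n ([?i, q, ?i] @ ?P) (?P @ [?i, q, ?i])"
    using q set_alpha_tail[of n c q] low_word_imp_words[OF P]
    by (intro weq_commute_words) (auto simp: commuting_def)
  also have "weq n \<dots> (rev ?P @ [?i, q, ?i])"
    using q P by (intro weq_append_right weq_rev_low_word) auto
  finally show ?thesis
    by (simp add: alpha_word_eq)
qed

lemma weq_low_letter_alpha_signed:
  assumes a: "a \<in> {1..n}" and q: "q \<in> {n+1..2*n}"
  shows "weq n ([a] @ alpha_word_signed n c q b) (alpha_word_signed n c q (b \<noteq> (a = q - n)) @ [a])"
proof (cases "a = q - n")
  case False
  then have "\<forall>x\<in>set (alpha_word_signed n c q b). commuting n x a"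
    using a q set_alpha_tail[of n c q]
    by (auto simp: alpha_word_signed_def alpha_word_eq commuting_def)
  then show ?thesis
    using False a q alpha_word_signed_in_words weq_sym[OF weq_commute_letter] by simp
next
  case True
  let ?\<alpha> = "alpha_word n c q"
  have a': "a \<in> {1..2*n}"
    using a by simp
  show ?thesis
  proof (cases b)
    case False
    then show ?thesis
      using True weq_alpha_reflect[OF q] by (simp add: alpha_word_signed_def)
  next
    case b: True
    txt \<open>Conjugate the case \<open>b = False\<close> by the involution \<open>s\<^sub>a\<close>.\<close>
    have "weq n ([a] @ rev ?\<alpha>) ([a] @ rev ?\<alpha> @ [a, a])"
      using weq_append_left[OF weq_sym[OF weq_square[OF a']], of "[a] @ rev ?\<alpha>"] q a'
      by (simp add: alpha_word_in_words)
    also have "weq n \<dots> ([a, a] @ ?\<alpha> @ [a])"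
      using weq_append_right[OF weq_append_left[OF weq_sym[OF weq_alpha_reflect[OF q]]], of "[a]" "[a]"]
        True q a' by (simp add: alpha_word_in_words)
    also have "weq n \<dots> (?\<alpha> @ [a])"
      using weq_append_right[OF weq_square[OF a'], of "?\<alpha> @ [a]"] q a'
      by (simp add: alpha_word_in_words)
    finally show ?thesis
      using True b by (simp add: alpha_word_signed_def)
  qed
qed

lemma weq_low_word_alpha_signed:
  assumes "low_word n x" and q: "q \<in> {n+1..2*n}"
  shows "weq n (x @ alpha_word_signed n c q b)
    (alpha_word_signed n c q (b \<noteq> parity (\<lambda>a. a = q - n) x) @ x)"
  using assms(1)
proof (induction x arbitrary: b)
  case Nil
  then show ?case
    using alpha_word_signed_in_words[OF q] by (simp add: weq_refl)
next
  case (Cons a x)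
  let ?b = "b \<noteq> parity (\<lambda>a. a = q - n) x"
  have a: "a \<in> {1..n}" "low_word n x"
    using Cons.prems by auto
  have "weq n ([a] @ x @ alpha_word_signed n c q b) ([a] @ alpha_word_signed n c q ?b @ x)"
    using Cons.IH a by (intro weq_append_left) auto
  also have "weq n \<dots> (alpha_word_signed n c q (?b \<noteq> (a = q - n)) @ [a] @ x)"
    using weq_append_right[OF weq_low_letter_alpha_signed[OF a(1) q]] low_word_imp_words a
    by fastforce
  finally have "weq n ((a # x) @ alpha_word_signed n c q b)
      (alpha_word_signed n c q (?b \<noteq> (a = q - n)) @ (a # x))"
    by simp
  moreover have "(?b \<noteq> (a = q - n)) = (b \<noteq> parity (\<lambda>a. a = q - n) (a # x))"
    by auto
  ultimately show ?case
    by (simp only:)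
qed

lemma weq_high_letter:
  assumes q: "q \<in> {n+1..2*n}"
  shows "weq n [q] (alpha_word n c q @ rev (alpha_tail n c q) @ [q - n])"
proof -
  let ?i = "q - n" and ?P = "alpha_tail n c q"
  have i: "?i \<in> {1..2*n}" and P: "?P \<in> words n" and q': "[q] \<in> words n"
    using q alpha_word_in_words[OF q] by (auto simp: alpha_word_eq)
  have "weq n ([q, ?i] @ (?P @ rev ?P) @ [?i]) ([q, ?i] @ [] @ [?i])"
    using q i P by (intro weq_append_left weq_append_right weq_append_rev) auto
  also have "weq n \<dots> [q]"
    using weq_append_left[OF weq_square[OF i] q'] by simp
  finally show ?thesis
    using weq_sym by (simp add: alpha_word_eq)
qed

lemma weq_low_word_snoc_high:
  assumes x: "low_word n x" and q: "q \<in> {n+1..2*n}"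
  shows "\<exists>b x'. low_word n x' \<and> weq n (x @ [q]) (alpha_word_signed n c q b @ x')"
proof -
  let ?y = "rev (alpha_tail n c q) @ [q - n]"
  have y: "low_word n ?y"
    using q set_alpha_tail[of n c q] by (auto simp: low_word_def)
  have "weq n (x @ [q]) ((x @ alpha_word_signed n c q False) @ ?y)"
    using weq_append_left[OF weq_high_letter[OF q], of x] low_word_imp_words[OF x]
    by (simp add: alpha_word_signed_def)
  also have "weq n \<dots> ((alpha_word_signed n c q (parity (\<lambda>a. a = q - n) x) @ x) @ ?y)"
    using weq_low_word_alpha_signed[OF x q, of c False] low_word_imp_words[OF y]
    by (intro weq_append_right) auto
  finally have "weq n (x @ [q]) (alpha_word_signed n c q (parity (\<lambda>a. a = q - n) x) @ x @ ?y)"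
    by simp
  moreover have "low_word n (x @ ?y)"
    using x y by simp
  ultimately show ?thesis
    by blast
qed

lemma alpha_word_signed_in_generate:
  assumes q: "q \<in> {n+1..2*n}"
  shows "cls n (alpha_word_signed n c q b) \<in> generate (pi1 n c) (alpha n c ` {n+1..2*n})"
proof (cases b)
  case True
  then have "cls n (alpha_word_signed n c q b) = inv\<^bsub>pi1 n c\<^esub> (alpha n c q)"
    using alpha_word_in_words[OF q] alpha_in_pi1[OF q]
    by (simp add: alpha_word_signed_def inv_pi1 inv_cls alpha_def)
  then show ?thesis
    using q by (auto intro: generate.inv)
next
  case False
  then show ?thesis
    using q by (auto simp: alpha_word_signed_def alpha_def intro: generate.incl)
qed

lemma one_pi1: "\<one>\<^bsub>pi1 n c\<^esub> = cls n []"
  by (simp add: pi1_def one_coxW)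

lemma carrier_pi1_subset: "carrier (pi1 n c) \<subseteq> carrier (coxW n)"
  by (auto simp: carrier_pi1)

lemma generate_alpha_subset_pi1:
  "generate (pi1 n c) (alpha n c ` {n+1..2*n}) \<subseteq> carrier (pi1 n c)"
  by (rule group.generate_incl[OF group_pi1]) (use alpha_in_pi1 in blast)

lemma cls_Nil_in_generate_alpha: "cls n [] \<in> generate (pi1 n c) (alpha n c ` {n+1..2*n})"
  using generate.one[of "pi1 n c"] by (simp add: one_pi1)

lemma cls_snoc_low_word:
  assumes x: "low_word n x" and a: "a \<in> {1..2*n}"
  shows "\<exists>h\<in>generate (pi1 n c) (alpha n c ` {n+1..2*n}).
    \<exists>x'. low_word n x' \<and> cls n (x @ [a]) = h \<otimes>\<^bsub>coxW n\<^esub> cls n x'"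
proof (cases "a \<le> n")
  case True
  then have "low_word n (x @ [a]) \<and> cls n (x @ [a]) = cls n [] \<otimes>\<^bsub>coxW n\<^esub> cls n (x @ [a])"
    using x a by (simp add: mult_cls low_word_imp_words)
  then show ?thesis
    using cls_Nil_in_generate_alpha by blast
next
  case False
  then have q: "a \<in> {n+1..2*n}"
    using a by auto
  then obtain b x' where x': "low_word n x'"
    and xa: "weq n (x @ [a]) (alpha_word_signed n c a b @ x')"
    using weq_low_word_snoc_high[OF x] by blast
  then have "cls n (x @ [a]) = cls n (alpha_word_signed n c a b) \<otimes>\<^bsub>coxW n\<^esub> cls n x'"
    using q by (simp add: cls_eqI[OF xa] mult_cls alpha_word_signed_in_words low_word_imp_words)
  then show ?thesis
    using x' alpha_word_signed_in_generate[OF q] by blast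
qed

lemma cls_eq_generate_mult_low_word:
  assumes "w \<in> words n"
  shows "\<exists>g\<in>generate (pi1 n c) (alpha n c ` {n+1..2*n}).
    \<exists>x. low_word n x \<and> cls n w = g \<otimes>\<^bsub>coxW n\<^esub> cls n x"
  using assms
proof (induction w rule: rev_induct)
  case Nil
  have "low_word n [] \<and> cls n [] = cls n [] \<otimes>\<^bsub>coxW n\<^esub> cls n []"
    by (simp add: mult_cls)
  then show ?case
    using cls_Nil_in_generate_alpha by blast
next
  case (snoc a w)
  interpret W: group "coxW n"
    by (rule group_coxW)
  let ?A = "generate (pi1 n c) (alpha n c ` {n+1..2*n})"
  have A: "?A \<subseteq> carrier (coxW n)"
    using generate_alpha_subset_pi1 carrier_pi1_subset by (rule order_trans)
  have a: "a \<in> {1..2*n}" "w \<in> words n"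
    using snoc.prems by auto
  obtain g x where g: "g \<in> ?A" and x: "low_word n x" and w: "cls n w = g \<otimes>\<^bsub>coxW n\<^esub> cls n x"
    using snoc.IH a by blast
  obtain h x' where h: "h \<in> ?A" and x': "low_word n x'"
    and xa: "cls n (x @ [a]) = h \<otimes>\<^bsub>coxW n\<^esub> cls n x'"
    using cls_snoc_low_word[OF x a(1)] by blast
  have "cls n (w @ [a]) = g \<otimes>\<^bsub>coxW n\<^esub> cls n (x @ [a])"
    using g A x a by (simp add: w mult_cls[symmetric] W.m_assoc cls_in_carrier low_word_imp_words subsetD)
  also have "\<dots> = (g \<otimes>\<^bsub>coxW n\<^esub> h) \<otimes>\<^bsub>coxW n\<^esub> cls n x'"
    using g h A x' by (simp add: xa W.m_assoc cls_in_carrier low_word_imp_words subsetD)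
  finally show ?case
    using generate.eng[OF g h] x' by auto
qed

lemma generate_alpha_eq_pi1:
  "generate (pi1 n c) (alpha n c ` {n+1..2*n}) = carrier (pi1 n c)"
proof
  interpret W: group "coxW n"
    by (rule group_coxW)
  let ?A = "generate (pi1 n c) (alpha n c ` {n+1..2*n})"
  show A: "?A \<subseteq> carrier (pi1 n c)"
    by (rule generate_alpha_subset_pi1)
  show "carrier (pi1 n c) \<subseteq> ?A"
  proof
    fix X assume X: "X \<in> carrier (pi1 n c)"
    then obtain w where w: "w \<in> words n" "X = cls n w"
      by (rule carrier_pi1_E)
    obtain g x where g: "g \<in> ?A" and x: "low_word n x" and gx: "cls n w = g \<otimes>\<^bsub>coxW n\<^esub> cls n x"
      using cls_eq_generate_mult_low_word[OF w(1)] by blast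
    obtain B where B: "weq n x (subset_word n B)"
      using weq_low_word_subset_word[OF x] by blast
    have gW: "g \<in> carrier (coxW n)"
      using g A carrier_pi1_subset by blast
    have "cls n x = inv\<^bsub>coxW n\<^esub> g \<otimes>\<^bsub>coxW n\<^esub> X"
      using gx w gW x by (simp add: W.m_assoc[symmetric] cls_in_carrier low_word_imp_words)
    also have "\<dots> \<in> carrier (pi1 n c)"
      using g A X subgroup.m_closed[OF subgroup_pi1] subgroup.m_inv_closed[OF subgroup_pi1] by blast
    finally have "subset_word n B = []"
      using subset_word_in_pi1[of n B c] by (simp add: cls_eqI[OF B])
    then have "cls n x = \<one>\<^bsub>coxW n\<^esub>"
      using cls_eqI[OF B] by (simp add: one_coxW)
    then show "X \<in> ?A"
      using g gx w gW by simp
  qed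
qed

lemma weq_alpha_twisted_commute:
  assumes p: "p \<in> {n+1..2*n}" and q: "q \<in> {n+1..2*n}" and "p < q" and "c (p - n) (q - n)"
  shows "weq n (alpha_word n c p @ rev (alpha_word n c q)) (alpha_word n c q @ alpha_word n c p)"
proof -
  let ?x = "[p - n] @ alpha_tail n c p"
  have x: "low_word n ?x"
    using p set_alpha_tail[of n c p] by (auto simp: low_word_def)
  have "q - n \<in> set (alpha_tail n c p)"
    using assms by (auto simp: alpha_tail_def)
  then have parity_x: "parity (\<lambda>a. a = q - n) ?x"
    using assms by (simp add: parity_eq_distinct distinct_alpha_tail)
  have "weq n ([p] @ ?x @ alpha_word_signed n c q True) ([p] @ alpha_word_signed n c q False @ ?x)"
    using weq_low_word_alpha_signed[OF x q, of c True] parity_x p by (intro weq_append_left) auto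
  also have "weq n \<dots> (alpha_word n c q @ [p] @ ?x)"
  proof -
    have "\<forall>a\<in>set (alpha_word n c q). commuting n a p"
      using p q \<open>p < q\<close> set_alpha_tail[of n c q] by (auto simp: alpha_word_eq commuting_def)
    then have "weq n ([p] @ alpha_word n c q) (alpha_word n c q @ [p])"
      using p q alpha_word_in_words weq_sym[OF weq_commute_letter] by simp
    then show ?thesis
      using low_word_imp_words[OF x] weq_append_right by (fastforce simp: alpha_word_signed_def)
  qed
  finally show ?thesis
    by (simp add: alpha_word_signed_def alpha_word_eq)
qed

lemma alpha_sq_in_derived:
  assumes "q \<in> torsion_idx n c"
  shows "alpha n c q \<otimes>\<^bsub>pi1 n c\<^esub> alpha n c q \<in> derived (pi1 n c) (carrier (pi1 n c))"
proof -
  interpret G: group "pi1 n c"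
    by (rule group_pi1)
  obtain p where p: "n + 1 \<le> p" "p < q" "c (p - n) (q - n)" and q: "q \<in> {n+1..2*n}"
    using assms by (auto simp: torsion_idx_def)
  then have p': "p \<in> {n+1..2*n}"
    by auto
  let ?a = "alpha n c p" and ?b = "alpha n c q"
  have a: "?a \<in> carrier (pi1 n c)" and b: "?b \<in> carrier (pi1 n c)"
    using alpha_in_pi1 p' q by auto
  have "inv\<^bsub>pi1 n c\<^esub> ?b = cls n (rev (alpha_word n c q))"
    using b alpha_word_in_words[OF q] by (simp add: inv_pi1 inv_cls alpha_def)
  then have rel: "?a \<otimes>\<^bsub>pi1 n c\<^esub> inv\<^bsub>pi1 n c\<^esub> ?b = ?b \<otimes>\<^bsub>pi1 n c\<^esub> ?a"
    using cls_eqI[OF weq_alpha_twisted_commute[of p n q c, OF p' q p(2,3)]] alpha_word_in_words[OF p']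
      alpha_word_in_words[OF q]
    by (simp add: alpha_def mult_cls)
  have "?b \<otimes>\<^bsub>pi1 n c\<^esub> ?b = ?b \<otimes>\<^bsub>pi1 n c\<^esub> ?a \<otimes>\<^bsub>pi1 n c\<^esub> inv\<^bsub>pi1 n c\<^esub> ?b \<otimes>\<^bsub>pi1 n c\<^esub> inv\<^bsub>pi1 n c\<^esub> ?a"
    using a b by (simp add: G.m_assoc rel del: mult_pi1)
  then show ?thesis
    unfolding derived_def using a b by (auto intro: generate.incl)
qed

section \<open>Abelianization\<close>

definition dih_coord :: "nat \<Rightarrow> nat \<Rightarrow> nat list set \<Rightarrow> int" where
  "dih_coord n q = cls_lift (\<lambda>w. fst (dih_word n (q - n) w))"

definition parity_coord :: "nat \<Rightarrow> nat list set \<Rightarrow> int" where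
  "parity_coord q = cls_lift (\<lambda>w. if parity (\<lambda>a. a = q) w then 1 else 0)"

lemma dih_coord_cls: "w \<in> words n \<Longrightarrow> dih_coord n q (cls n w) = fst (dih_word n (q - n) w)"
  unfolding dih_coord_def by (rule cls_lift_cls) (simp_all add: dih_word_wrel[where k = "q - n"])

lemma parity_coord_cls:
  "w \<in> words n \<Longrightarrow> parity_coord q (cls n w) = (if parity (\<lambda>a. a = q) w then 1 else 0)"
  unfolding parity_coord_def by (rule cls_lift_cls) (simp_all add: parity_wrel[where P = "\<lambda>a. a = q"])

text \<open>Away from the torsion indices the reflection part of the dihedral image vanishes on
  \<open>\<pi>\<^sub>1\<close>, so that \<open>dih_coord\<close> becomes additive there.\<close>

lemma not_snd_dih_word:
  assumes q: "q \<in> {n+1..2*n}" "q \<notin> torsion_idx n c" and w: "w \<in> words n"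
    and "\<forall>k\<in>{1..n}. \<not> lam_word n c w k"
  shows "\<not> snd (dih_word n (q - n) w)"
proof -
  let ?k = "q - n"
  have "snd (dih_word n ?k w) = parity (\<lambda>a. lam n c a ?k) w"
    unfolding snd_dih_word
  proof (rule parity_cong)
    fix a assume "a \<in> set w"
    then have a: "a \<in> {1..2*n}"
      using w by (auto simp: words_def)
    show "(a = ?k \<or> a = ?k + n) = lam n c a ?k"
    proof (cases "a \<le> n")
      case False
      then have "\<not> (a - n < ?k \<and> c (a - n) ?k)"
        using q a by (auto simp: torsion_idx_def)
      then show ?thesis
        using False q a by (auto simp: lam_def)
    qed (use q in \<open>auto simp: lam_def\<close>)
  qed
  moreover have "?k \<in> {1..n}"
    using q by auto
  ultimately show ?thesis
    using assms(4) by (simp add: lam_word_parity)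
qed

lemma dih_coord_hom:
  assumes "q \<in> {n+1..2*n} - torsion_idx n c"
  shows "dih_coord n q \<in> hom (pi1 n c) integer_group"
proof (rule homI)
  fix x y assume "x \<in> carrier (pi1 n c)" "y \<in> carrier (pi1 n c)"
  then obtain u v where u: "u \<in> words n" "x = cls n u" "\<forall>k\<in>{1..n}. \<not> lam_word n c u k"
    and v: "v \<in> words n" "y = cls n v"
    by (metis carrier_pi1_E)
  then show "dih_coord n q (x \<otimes>\<^bsub>pi1 n c\<^esub> y) = dih_coord n q x \<otimes>\<^bsub>integer_group\<^esub> dih_coord n q y"
    using not_snd_dih_word[of q n c u] assms
    by (simp add: mult_cls dih_coord_cls dih_word_append dih_mult_def)
qed simp

lemma parity_coord_hom: "parity_coord q \<in> hom (pi1 n c) (integer_mod_group 2)"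
proof (rule homI)
  fix x assume "x \<in> carrier (pi1 n c)"
  then show "parity_coord q x \<in> carrier (integer_mod_group 2)"
    by (simp add: parity_coord_def cls_lift_def carrier_integer_mod_group)
next
  fix x y assume "x \<in> carrier (pi1 n c)" "y \<in> carrier (pi1 n c)"
  then obtain u v where "u \<in> words n" "x = cls n u" "v \<in> words n" "y = cls n v"
    by (metis carrier_pi1_E)
  then show "parity_coord q (x \<otimes>\<^bsub>pi1 n c\<^esub> y)
      = parity_coord q x \<otimes>\<^bsub>integer_mod_group 2\<^esub> parity_coord q y"
    by (simp add: mult_cls parity_coord_cls)
qed

lemma dih_coord_alpha:
  assumes q: "q \<in> {n+1..2*n} - torsion_idx n c" and j: "j \<in> {n+1..2*n}"
  shows "dih_coord n q (alpha n c j) = (if j = q then 1 else 0)"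
proof -
  let ?k = "q - n"
  have "a \<noteq> ?k \<and> a \<noteq> ?k + n" if a: "a \<in> set (alpha_tail n c j)" for a
  proof -
    have "j - n < a" "a \<le> n" "c (j - n) a"
      using a by (auto simp: alpha_tail_def)
    then show ?thesis
      using q j by (auto simp: torsion_idx_def)
  qed
  then have tail: "dih_word n ?k (alpha_tail n c j) = (0, False)"
    by (simp add: dih_word_avoiding)
  have "q \<noteq> ?k" "?k + n = q"
    using q by auto
  then have "dih_word n ?k (alpha_word n c j) = (if j = q then (1, False) else (0, False))"
    using tail q j by (auto simp: alpha_word_eq dih_word_Cons dih_letter_def dih_mult_def)
  then show ?thesis
    by (simp add: alpha_def dih_coord_cls alpha_word_in_words[OF j])
qed

lemma parity_coord_alpha:
  assumes "q \<in> {n+1..2*n}" and j: "j \<in> {n+1..2*n}"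
  shows "parity_coord q (alpha n c j) = (if j = q then 1 else 0)"
proof -
  have "\<not> parity (\<lambda>a. a = q) (alpha_tail n c j)"
    using set_alpha_tail[of n c j] assms
    by (subst parity_cong[of _ _ "\<lambda>_. False"]) (auto simp: parity_def)
  moreover have "j - n \<noteq> q"
    using assms by auto
  ultimately have "parity (\<lambda>a. a = q) (alpha_word n c j) \<longleftrightarrow> j = q"
    by (simp add: alpha_word_eq)
  then show ?thesis
    by (simp add: alpha_def parity_coord_cls alpha_word_in_words[OF j])
qed

abbreviation abelianize :: "nat \<Rightarrow> (nat \<Rightarrow> nat \<Rightarrow> bool) \<Rightarrow> nat list set \<Rightarrow> nat list set set" where
  "abelianize n c \<equiv> \<lambda>x. derived (pi1 n c) (carrier (pi1 n c)) #>\<^bsub>pi1 n c\<^esub> x"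

lemma comm_group_H1: "comm_group (H1 n c)"
  unfolding H1_def by (rule group.derived_quot_is_comm_group[OF group_pi1])

lemma abelianize_hom: "abelianize n c \<in> hom (pi1 n c) (H1 n c)"
  unfolding H1_def by (rule normal.r_coset_hom_Mod[OF group.derived_self_is_normal[OF group_pi1]])

lemma carrier_H1: "carrier (H1 n c) = abelianize n c ` carrier (pi1 n c)"
  by (auto simp: H1_def FactGroup_def RCOSETS_def)

lemma alpha_bar_in_H1: "j \<in> {n+1..2*n} \<Longrightarrow> alpha_bar n c j \<in> carrier (H1 n c)"
  unfolding alpha_bar_def carrier_H1 using alpha_in_pi1 by blast

lemma generate_alpha_bar_eq_H1:
  "generate (H1 n c) (alpha_bar n c ` {n+1..2*n}) = carrier (H1 n c)"
proof -
  interpret ab: group_hom "pi1 n c" "H1 n c" "abelianize n c"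
    using abelianize_hom group_pi1 comm_group_H1
    by (simp add: group_hom_def group_hom_axioms_def comm_group.axioms(2))
  have "alpha_bar n c ` {n+1..2*n} = abelianize n c ` alpha n c ` {n+1..2*n}"
    by (auto simp: alpha_bar_def)
  moreover have "generate (H1 n c) (abelianize n c ` alpha n c ` {n+1..2*n})
      = abelianize n c ` generate (pi1 n c) (alpha n c ` {n+1..2*n})"
    by (rule ab.generate_img) (use alpha_in_pi1 in blast)
  moreover note generate_alpha_eq_pi1
  ultimately show ?thesis
    unfolding carrier_H1 by (simp only:)
qed

lemma alpha_bar_square:
  assumes q: "q \<in> torsion_idx n c"
  shows "alpha_bar n c q \<otimes>\<^bsub>H1 n c\<^esub> alpha_bar n c q = \<one>\<^bsub>H1 n c\<^esub>"
proof -
  have a: "alpha n c q \<in> carrier (pi1 n c)"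
    using q alpha_in_pi1 by (auto simp: torsion_idx_def)
  have "alpha_bar n c q \<otimes>\<^bsub>H1 n c\<^esub> alpha_bar n c q
      = abelianize n c (alpha n c q \<otimes>\<^bsub>pi1 n c\<^esub> alpha n c q)"
    using hom_mult[OF abelianize_hom a a] by (simp add: alpha_bar_def del: mult_pi1)
  also have "\<dots> = derived (pi1 n c) (carrier (pi1 n c))"
    using subgroup.rcos_const[OF normal.axioms(1)[OF group.derived_self_is_normal[OF group_pi1]]
        group_pi1 alpha_sq_in_derived[OF q]] .
  finally show ?thesis
    by (simp add: H1_def)
qed

lemma H1_hom_from_pi1:
  assumes "comm_group K" and "h \<in> hom (pi1 n c) K"
  obtains f where "f \<in> hom (H1 n c) K"
    and "\<And>j. j \<in> {n+1..2*n} \<Longrightarrow> f (alpha_bar n c j) = h (alpha n c j)"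
proof -
  obtain f where "f \<in> hom (H1 n c) K"
    and "\<And>x. x \<in> carrier (pi1 n c) \<Longrightarrow> f (abelianize n c x) = h x"
    using group.derived_quotient_universal[OF group_pi1 assms] unfolding H1_def by metis
  then show thesis
    using that alpha_in_pi1 by (simp add: alpha_bar_def)
qed

lemma H1_free_coordinate:
  assumes q: "q \<in> {n+1..2*n} - torsion_idx n c"
  shows "\<exists>f. f \<in> hom (H1 n c) integer_group
    \<and> (\<forall>j\<in>{n+1..2*n}. f (alpha_bar n c j) = (if j = q then 1 else 0))"
proof -
  obtain f where "f \<in> hom (H1 n c) integer_group"
    and "\<And>j. j \<in> {n+1..2*n} \<Longrightarrow> f (alpha_bar n c j) = dih_coord n q (alpha n c j)"
    by (rule H1_hom_from_pi1[OF abelian_integer_group dih_coord_hom[OF q]]) blast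
  then show ?thesis
    using dih_coord_alpha[OF q] by auto
qed

lemma H1_torsion_coordinate:
  assumes q: "q \<in> torsion_idx n c"
  shows "\<exists>f. f \<in> hom (H1 n c) (integer_mod_group 2)
    \<and> (\<forall>j\<in>{n+1..2*n}. f (alpha_bar n c j) = (if j = q then 1 else 0))"
proof -
  have "q \<in> {n+1..2*n}"
    using q by (simp add: torsion_idx_def)
  obtain f where "f \<in> hom (H1 n c) (integer_mod_group 2)"
    and "\<And>j. j \<in> {n+1..2*n} \<Longrightarrow> f (alpha_bar n c j) = parity_coord q (alpha n c j)"
    by (rule H1_hom_from_pi1[OF abelian_integer_mod_group parity_coord_hom]) blast
  then show ?thesis
    using parity_coord_alpha[OF \<open>q \<in> {n+1..2*n}\<close>] by auto
qed

lemma H1_abelian_coordinates: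
  "\<exists>\<mu> \<nu>. abelian_coordinates (H1 n c) {n+1..2*n} (torsion_idx n c) (alpha_bar n c) \<mu> \<nu>"
proof -
  from bchoice[OF ballI[OF H1_free_coordinate]] obtain \<mu>
    where \<mu>: "\<forall>q\<in>{n+1..2*n} - torsion_idx n c. \<mu> q \<in> hom (H1 n c) integer_group
      \<and> (\<forall>j\<in>{n+1..2*n}. \<mu> q (alpha_bar n c j) = (if j = q then 1 else 0))" ..
  from bchoice[OF ballI[OF H1_torsion_coordinate]] obtain \<nu>
    where \<nu>: "\<forall>q\<in>torsion_idx n c. \<nu> q \<in> hom (H1 n c) (integer_mod_group 2)
      \<and> (\<forall>j\<in>{n+1..2*n}. \<nu> q (alpha_bar n c j) = (if j = q then 1 else 0))" ..
  have "abelian_coordinates (H1 n c) {n+1..2*n} (torsion_idx n c) (alpha_bar n c) \<mu> \<nu>"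
  proof (rule abelian_coordinates.intro)
    show "torsion_idx n c \<subseteq> {n+1..2*n}"
      by (auto simp: torsion_idx_def)
    show "alpha_bar n c ` {n+1..2*n} \<subseteq> carrier (H1 n c)"
      using alpha_bar_in_H1 by blast
  qed (use \<mu> \<nu> comm_group_H1 generate_alpha_bar_eq_H1 alpha_bar_square in auto)
  then show ?thesis
    by blast
qed

theorem proposition2p7:
  fixes n :: nat and c :: "nat \<Rightarrow> nat \<Rightarrow> bool"
  assumes "n \<ge> 1" and "bott_matrix n c"
  shows "alpha n c ` {n+1..2*n} \<subseteq> carrier (pi1 n c)
    \<and> carrier (H1 n c) = generate (H1 n c) (alpha_bar n c ` {n+1..2*n})
    \<and> (\<forall>k :: nat \<Rightarrow> int.
          finprod (H1 n c) (\<lambda>j. alpha_bar n c j [^]\<^bsub>H1 n c\<^esub> k j) {n+1..2*n} = \<one>\<^bsub>H1 n c\<^esub>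
          \<longleftrightarrow> (\<forall>j\<in>{n+1..2*n}. if j \<in> torsion_idx n c then even (k j) else k j = 0))
    \<and> H1 n c \<cong> (sum_group {..<n - card (torsion_idx n c)} (\<lambda>_. integer_group)
                 \<times>\<times> sum_group {..<card (torsion_idx n c)} (\<lambda>_. integer_mod_group 2))"
proof -
  obtain \<mu> \<nu> where "abelian_coordinates (H1 n c) {n+1..2*n} (torsion_idx n c) (alpha_bar n c) \<mu> \<nu>"
    using H1_abelian_coordinates by blast
  then interpret H1: abelian_coordinates "H1 n c" "{n+1..2*n}" "torsion_idx n c" "alpha_bar n c" \<mu> \<nu> .
  show ?thesis
    using alpha_in_pi1 generate_alpha_bar_eq_H1 H1.iso_sum_groups
      H1.combination_eq_one_iff[unfolded H1.combination_def]
    by auto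
qed

end
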